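(* Let $n\ge1$, let $b_1,\dots,b_n\ge2$ be integers and $\varepsilon_1,\dots,\varepsilon_n\in\{+1,-1\}$, and let $x=[\langle b_j:\varepsilon_j\rangle_{j=1}^n]$. Then for every $z\in\mathcal{F}_n(x)$ and every $k$ with $0\le k\le n-1$, \[\frac45\cdot\frac1{b_{k+1}}\le|G^{\circ k}(z)|\le\frac43\cdot\frac1{b_{k+1}},\] and $\arg G^{\circ k}(z)\in[-\pi/4,\pi/4]$ if $\operatorname{Re}G^{\circ k}(z)>0$, while $\arg G^{\circ k}(z)\in[3\pi/4,5\pi/4]$ if $\operatorname{Re}G^{\circ k}(z)<0$.
   Context: For $x\in\mathbb{R}$, $[x]$ denotes the closest integer to $x$ with the convention $x\in([x]-1/2,[x]+1/2]$ for $x>0$, $x\in[[x]-1/2,[x]+1/2)$ for $x<0$, and $[0]=0$. Define $G(z)=-1/z-[\operatorname{Re}(-1/z)]$ for $z\in\mathbb{C}\setminus\{0\}$. For integers $b_j\ge2$ and signs $\varepsilon_j$, $[\langle b_j:\varepsilon_j\rangle_{j=1}^n]=\cfrac{\varepsilon_1}{b_1+\cfrac{\varepsilon_2}{\ddots+\cfrac{\varepsilon_n}{b_n}}}$. For an integer $b\ge2$ and $s\in\{\pm1\}$ let $D(s/b)=\{-1/w: w\in B(-sb,1/2)\}$, the open round disk (symmetric about $\mathbb{R}$) containing $s/b$, on which $G$ is a holomorphic bijection onto $B(0,1/2)$. For $x=[\langle b_j:\varepsilon_j\rangle_{j=1}^n]$ let $s_k\in\{\pm1\}$ be the sign of the real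 number $G^{\circ(k-1)}(x)$, $1\le k\le n$, and let $\mathcal{F}_n(x)$ be the set of $z$ such that for every $0\le k\le n-1$, $G^{\circ k}(z)$ is defined and lies in $D(s_{k+1}/b_{k+1})$ (the round disk of $\mathcal{F}_n$ about $x$ on which $G^{\circ n}$ maps into $B(0,1/2)$). *)

theory Defs
  imports "HOL-Analysis.Analysis"
begin

text \<open>Closest integer with the paper's convention: for x > 0, x in ([x]-1/2,[x]+1/2];
for x < 0, x in [[x]-1/2,[x]+1/2); [0] = 0.\<close>
definition nint :: "real \<Rightarrow> int" where
  "nint x = (if x > 0 then \<lceil>x - 1/2\<rceil> else if x < 0 then \<lfloor>x + 1/2\<rfloor> else 0)"

text \<open>The map G(z) = -1/z - [Re(-1/z)] (only meaningful for z ~= 0).\<close>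
definition G :: "complex \<Rightarrow> complex" where
  "G z = - 1 / z - of_int (nint (Re (- 1 / z)))"

fun cfrac :: "(int \<times> int) list \<Rightarrow> real" where
  "cfrac [] = 0"
| "cfrac ((b, e) # rest) = of_int e / (of_int b + cfrac rest)"

definition Ddisk :: "int \<Rightarrow> int \<Rightarrow> complex set" where
  "Ddisk s b = (\<lambda>w. - 1 / w) ` ball (- (of_int s * of_int b)) (1/2)"

definition cfx :: "nat \<Rightarrow> (nat \<Rightarrow> int) \<Rightarrow> (nat \<Rightarrow> int) \<Rightarrow> real" where
  "cfx n b e = cfrac (map (\<lambda>j. (b j, e j)) [1..<n+1])"

definition sgnseq :: "nat \<Rightarrow> (nat \<Rightarrow> int) \<Rightarrow> (nat \<Rightarrow> int) \<Rightarrow> nat \<Rightarrow> int" where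
  "sgnseq n b e k =
     (let y = Re ((G ^^ (k - 1)) (complex_of_real (cfx n b e)))
      in if y > 0 then 1 else if y < 0 then -1 else 0)"

definition Fn :: "nat \<Rightarrow> (nat \<Rightarrow> int) \<Rightarrow> (nat \<Rightarrow> int) \<Rightarrow> complex set" where
  "Fn n b e = {z. \<forall>k<n. (G ^^ k) z \<in> Ddisk (sgnseq n b e (k + 1)) (b (k + 1))}"

end

theory Submission
  imports Defs
begin

text \<open>Every point of \<open>D(s/b)\<close> is \<open>-1/w\<close> with \<open>w\<close> within \<open>1/2\<close> of the real number \<open>-sb\<close>,
  so \<open>|w|\<close> is pinned between \<open>b - 1/2\<close> and \<open>b + 1/2\<close> and \<open>w\<close> lies in the double cone
  \<open>|Im w| \<le> |Re w|\<close>. Inversion \<open>w \<mapsto> -1/w\<close> turns the first fact into the bounds on \<open>|u|\<close>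
  and preserves the double cone, which is exactly the angular statement. The signs \<open>s\<^sub>k\<close> are
  \<open>\<plusminus>1\<close> because \<open>G\<close> maps reals to reals.\<close>

lemma G_of_real: "G (of_real r) = of_real (- 1 / r - of_int (nint (- 1 / r)))"
proof -
  have "- 1 / complex_of_real r = of_real (- 1 / r)" by simp
  then show ?thesis by (simp add: G_def del: of_real_divide)
qed

lemma funpow_G_of_real_in_Reals: "(G ^^ j) (of_real x) \<in> \<real>"
proof (induction j)
  case (Suc j)
  then obtain r where "(G ^^ j) (of_real x) = of_real r" by (auto elim: Reals_cases)
  then show ?case by (simp add: G_of_real)
qed simp

lemma sgnseq_unit:
  assumes "(G ^^ k) (of_real (cfx n b e)) \<noteq> 0"
  shows "sgnseq n b e (Suc k) \<in> {1, -1}"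
proof -
  obtain r where r: "(G ^^ k) (of_real (cfx n b e)) = of_real r"
    using funpow_G_of_real_in_Reals by (blast elim: Reals_cases)
  with assms have "r \<noteq> 0" by auto
  with r show ?thesis by (auto simp: sgnseq_def Let_def)
qed

lemma norm_bounds_ball_real:
  assumes "cmod (w - of_real c) < 1/2"
  shows "\<bar>c\<bar> - 1/2 < cmod w" "cmod w < \<bar>c\<bar> + 1/2"
  using assms norm_triangle_ineq2[of w "of_real c"] norm_triangle_ineq3[of w "of_real c"]
  by (auto simp: norm_minus_commute)

lemma abs_Im_le_abs_Re_ball_real:
  assumes "cmod (w - of_real c) < 1/2" "\<bar>c\<bar> \<ge> 1"
  shows "\<bar>Im w\<bar> \<le> \<bar>Re w\<bar>"
proof -
  have "\<bar>Re w - c\<bar> < 1/2" "\<bar>Im w\<bar> < 1/2"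
    using assms(1) abs_Re_le_cmod[of "w - of_real c"] abs_Im_le_cmod[of "w - of_real c"]
    by auto
  with assms(2) show ?thesis by linarith
qed

lemma abs_Im_le_abs_Re_minus_inverse:
  assumes "\<bar>Im w\<bar> \<le> \<bar>Re w\<bar>"
  shows "\<bar>Im (- 1 / w)\<bar> \<le> \<bar>Re (- 1 / w)\<bar>"
  using assms by (simp add: Re_divide Im_divide abs_divide divide_right_mono)

lemma Arg_le_quarter_pi:
  assumes "Re u > 0" "\<bar>Im u\<bar> \<le> Re u"
  shows "Arg u \<in> {-pi/4..pi/4}"
proof -
  have "-1 \<le> Im u / Re u" "Im u / Re u \<le> 1"
    using assms by (auto simp: field_simps abs_le_iff)
  then have "arctan (-1) \<le> arctan (Im u / Re u)" "arctan (Im u / Re u) \<le> arctan 1"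
    by (simp_all only: arctan_le_iff)
  then show ?thesis
    by (simp add: arg_conv_arctan[OF assms(1)] arctan_minus arctan_one)
qed

lemma rcis_angle_right_cone:
  assumes "Re u > 0" "\<bar>Im u\<bar> \<le> \<bar>Re u\<bar>"
  shows "\<exists>\<theta>. \<theta> \<in> {-pi/4..pi/4} \<and> u = rcis (cmod u) \<theta>"
  using assms Arg_le_quarter_pi[of u] by (intro exI[of _ "Arg u"]) (simp add: rcis_cmod_Arg)

lemma rcis_angle_left_cone:
  assumes "Re u < 0" "\<bar>Im u\<bar> \<le> \<bar>Re u\<bar>"
  shows "\<exists>\<theta>. \<theta> \<in> {3*pi/4..5*pi/4} \<and> u = rcis (cmod u) \<theta>"
proof -
  obtain t where t: "t \<in> {-pi/4..pi/4}" "-u = rcis (cmod u) t"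
    using rcis_angle_right_cone[of "-u"] assms by auto
  have "u = rcis (cmod u) (t + pi)"
    using t(2) by (simp add: rcis_def cis_def complex_eq_iff)
  with t(1) show ?thesis by (intro exI[of _ "t + pi"]) auto
qed

lemma Ddisk_bounds:
  assumes "b \<ge> 2" "s \<in> {1, -1}" "u \<in> Ddisk s b"
  shows "4/5 * (1 / real_of_int b) \<le> cmod u" "cmod u \<le> 4/3 * (1 / real_of_int b)"
    and "\<bar>Im u\<bar> \<le> \<bar>Re u\<bar>"
proof -
  define c where "c = - (real_of_int s * real_of_int b)"
  obtain w where w: "cmod (w - of_real c) < 1/2" and u: "u = - 1 / w"
    using assms(3) by (auto simp: Ddisk_def c_def dist_norm norm_minus_commute)
  have c: "\<bar>c\<bar> = real_of_int b" "\<bar>c\<bar> \<ge> 2"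
    using assms(1,2) by (auto simp: c_def)
  note nw = norm_bounds_ball_real[OF w]
  have nu: "cmod u = 1 / cmod w" by (simp add: u norm_divide)
  have "4/5 * (1 / real_of_int b) \<le> 1 / (\<bar>c\<bar> + 1/2)"
    using c by (simp add: field_simps)
  also have "\<dots> \<le> cmod u"
    unfolding nu using nw c by (intro divide_left_mono) (auto intro!: mult_pos_pos)
  finally show "4/5 * (1 / real_of_int b) \<le> cmod u" .
  have "cmod u \<le> 1 / (\<bar>c\<bar> - 1/2)"
    unfolding nu using nw c by (intro divide_left_mono) (auto intro!: mult_pos_pos)
  also have "\<dots> \<le> 4/3 * (1 / real_of_int b)"
    using c by (simp add: field_simps)
  finally show "cmod u \<le> 4/3 * (1 / real_of_int b)" .
  show "\<bar>Im u\<bar> \<le> \<bar>Re u\<bar>"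
    using u w c abs_Im_le_abs_Re_ball_real abs_Im_le_abs_Re_minus_inverse by simp
qed

theorem lemma6p4:
  fixes n :: nat and b e :: "nat \<Rightarrow> int" and z :: complex and k :: nat
  assumes "n \<ge> 1"
    and "\<And>j. j \<in> {1..n} \<Longrightarrow> b j \<ge> 2"
    and "\<And>j. j \<in> {1..n} \<Longrightarrow> e j \<in> {1, -1}"
    and "\<And>j. j < n \<Longrightarrow> (G ^^ j) (complex_of_real (cfx n b e)) \<noteq> 0"
    and "z \<in> Fn n b e"
    and "k < n"
  shows "4/5 * (1 / real_of_int (b (k+1))) \<le> cmod ((G ^^ k) z)
       \<and> cmod ((G ^^ k) z) \<le> 4/3 * (1 / real_of_int (b (k+1)))
       \<and> (Re ((G ^^ k) z) > 0 \<longrightarrow>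
            (\<exists>\<theta>. \<theta> \<in> {-pi/4..pi/4} \<and> (G ^^ k) z = rcis (cmod ((G ^^ k) z)) \<theta>))
       \<and> (Re ((G ^^ k) z) < 0 \<longrightarrow>
            (\<exists>\<theta>. \<theta> \<in> {3*pi/4..5*pi/4} \<and> (G ^^ k) z = rcis (cmod ((G ^^ k) z)) \<theta>))"
proof -
  have b: "b (k+1) \<ge> 2" using assms(2,6) by auto
  have s: "sgnseq n b e (k+1) \<in> {1, -1}" using sgnseq_unit assms(4,6) by simp
  have "(G ^^ k) z \<in> Ddisk (sgnseq n b e (k+1)) (b (k+1))"
    using assms(5,6) by (auto simp: Fn_def)
  note bounds = Ddisk_bounds[OF b s this]
  show ?thesis
    using bounds rcis_angle_right_cone rcis_angle_left_cone by blast
qed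

end
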